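(* For the symmetric complex Brownian motion GSP $b$ on $\mathbb R$ described in the context, the Weyl symbol of its covariance operator is $$\sigma_b(x,\xi)=2x^2\Big(\frac{\sin(x\xi)}{x\xi}\Big)^2h(x),\qquad (x,\xi)\in\mathbb R^2,$$ where $\frac{\sin 0}{0}:=1$ and $h$ is the Heaviside function.
   Context: Let $b_1,b_2:[0,\infty)\to L^2_0(\Omega)$ be independent real-valued Gaussian processes with $\mathbf E(b_j(x)b_j(y))=\tfrac12\min(x,y)$, set $b=b_1+ib_2$ and $b(x)=0$ for $x<0$; $(b,\varphi)=\int_{\mathbb R}b(x)\overline{\varphi(x)}dx$ defines a tempered GSP on $\mathbb R$ with covariance distribution $k_b(x,y)=\mathbf E(b(x)\overline{b(y)})=\min(x,y)$ for $x,y\ge0$ and $0$ otherwise. The covariance operator is $(\mathscr K_b\psi,\varphi)=(k_b,\varphi\otimes\overline\psi)$ (pairings conjugate linear in the second slot). The Weyl symbol of a continuous linear $\mathscr K:\mathscr S(\mathbb R)\to\mathscr S'(\mathbb R)$ is the unique $\sigma\in\mathscr S'(\mathbb R^2)$ with $(\mathscr Kf,g)=(2\pi)^{-1/2}(\sigma,W(g,f))$, where $W(g,f)(x,\xi)=(2\pi)^{-1/2}\int g(x+y/2)\overline{f(x-y/2)}e^{-iy\xi}dy$; equivalently $\sigma=(2\pi)^{1/2}\mathscr F_2(k\circ\kappa)$ with $\kappa(x,y)=(x+y/2,x-y/2)$ and $\mathscr F_2$ the Fourier transform $(2\pi)^{-1/2}\int\cdot\,e^{-iy\xi}dy$ in the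 second variable. *)

theory Defs
  imports "HOL-Analysis.Analysis"
begin

definition nderiv :: "nat \<Rightarrow> (real \<Rightarrow> complex) \<Rightarrow> real \<Rightarrow> complex" where
  "nderiv n f = ((\<lambda>g x. vector_derivative g (at x)) ^^ n) f"

definition schwartz :: "(real \<Rightarrow> complex) \<Rightarrow> bool" where
  "schwartz f \<longleftrightarrow>
     (\<forall>n x. nderiv n f differentiable (at x)) \<and>
     (\<forall>n m. bounded (range (\<lambda>x. complex_of_real (x ^ m) * nderiv n f x)))"

text \<open>Covariance distribution of the complex Brownian motion b (a locally integrable function).\<close>
definition kb :: "real \<Rightarrow> real \<Rightarrow> complex" where
  "kb x y = (if 0 \<le> x \<and> 0 \<le> y then complex_of_real (min x y) else 0)"

definition wigner :: "(real \<Rightarrow> complex) \<Rightarrow> (real \<Rightarrow> complex) \<Rightarrow> real \<Rightarrow> real \<Rightarrow> complex" where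
  "wigner g f x \<xi> = complex_of_real (1 / sqrt (2 * pi)) *
     (LINT y|lborel. g (x + y / 2) * cnj (f (x - y / 2)) * cis (- (y * \<xi>)))"

text \<open>Covariance operator pairing (K_b f, g) = (k_b, g \<otimes> conj f).\<close>
definition cov_pairing :: "(real \<Rightarrow> real \<Rightarrow> complex) \<Rightarrow> (real \<Rightarrow> complex) \<Rightarrow> (real \<Rightarrow> complex) \<Rightarrow> complex" where
  "cov_pairing k f g = (LINT p|lborel. k (fst p) (snd p) * cnj (g (fst p)) * f (snd p))"

definition sinc :: "real \<Rightarrow> real" where
  "sinc t = (if t = 0 then 1 else sin t / t)"

definition heaviside :: "real \<Rightarrow> real" where
  "heaviside x = (if 0 \<le> x then 1 else 0)"

text \<open>A locally integrable function sigma is the Weyl symbol of the operator with kernel k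
  iff (K f, g) = (2 pi)^(-1/2) (sigma, W(g,f)) for all Schwartz f, g
  (pairing conjugate linear in the second slot).\<close>
definition is_weyl_symbol :: "(real \<Rightarrow> real \<Rightarrow> complex) \<Rightarrow> (real \<Rightarrow> real \<Rightarrow> complex) \<Rightarrow> bool" where
  "is_weyl_symbol \<sigma> k \<longleftrightarrow>
     (\<forall>f g. schwartz f \<longrightarrow> schwartz g \<longrightarrow>
        cov_pairing k f g =
        complex_of_real (1 / sqrt (2 * pi)) *
          (LINT p|lborel. \<sigma> (fst p) (snd p) * cnj (wigner g f (fst p) (snd p))))"

end

theory Submission
  imports Defs "HOL-Probability.Sinc_Integral"
begin

(* Writing sin^2 s cos 2v = (sin^2 (s + v) + sin^2 (s - v)) / 2 - sin^2 v with s = x t, v = y t / 2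
   expresses 2 x^2 sinc^2 (x t) cos (y t) through rescaled Fejer kernels c^2/2 sinc^2 (c t / 2), whose
   integrals are pi |c|. Hence for x >= 0 the inverse Fourier transform of the symbol in xi is
   2 pi max 0 (x - |y| / 2) = 2 pi k_b (x + y/2, x - y/2), and it vanishes for x < 0. Inserting this
   into the pairing with the Wigner distribution (Fubini) and substituting (a, b) = (x + y/2, x - y/2),
   a map with Jacobian -1, gives the pairing of k_b with g and f. Schwartz functions are
   O((1 + t^2)^-3), which makes every integral absolutely convergent. *)

(* Sinc_Integral's abbreviation sinc agrees with Defs.sinc but would shadow it. *)
hide_const (open) Sinc_Integral.sinc

section \<open>Decay estimates\<close>

definition decay :: "real \<Rightarrow> real" where
  "decay t = inverse (1 + t\<^sup>2)"

lemma one_plus_sq_pos: "0 < 1 + (t::real)\<^sup>2"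
  by (simp add: add_pos_nonneg)

lemma decay_pos: "0 < decay t"
  using one_plus_sq_pos[of t] by (simp add: decay_def)

lemma decay_nonneg: "0 \<le> decay t"
  using decay_pos[of t] by simp

lemma decay_le_one: "decay t \<le> 1"
  using le_imp_inverse_le[of 1 "1 + t\<^sup>2"] by (simp add: decay_def)

lemma one_plus_sq_mult_decay: "(1 + t\<^sup>2) * decay t = 1"
  using one_plus_sq_pos[of t] by (simp add: decay_def)

lemma abs_mult_decay_le_one: "\<bar>t\<bar> * decay t \<le> 1"
proof -
  have "0 \<le> (\<bar>t\<bar> - 1)\<^sup>2"
    by simp
  then have "\<bar>t\<bar> \<le> 1 + t\<^sup>2"
    by (simp add: power2_eq_square algebra_simps)
  from mult_right_mono[OF this decay_nonneg[of t]] show ?thesis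
    by (simp add: one_plus_sq_mult_decay)
qed

lemma borel_measurable_decay [measurable]: "decay \<in> borel_measurable borel"
  unfolding decay_def[abs_def] by measurable

lemma integrable_decay: "integrable lborel decay"
  using integrable_inverse_1_plus_square
  by (simp add: decay_def[abs_def] set_integrable_def)

lemma decay_mult_le:
  assumes "1 + s \<le> (1 + a\<^sup>2) * (1 + b\<^sup>2)" "0 \<le> s"
  shows "decay a * decay b \<le> inverse (1 + s)"
  using assms by (simp add: decay_def le_imp_inverse_le flip: inverse_mult_distrib)

lemma decay_half_sum_mult_half_diff_le_fst: "decay (x + y / 2) * decay (x - y / 2) \<le> decay x"
proof -
  have "(1 + (x + y / 2)\<^sup>2) * (1 + (x - y / 2)\<^sup>2) = 1 + x\<^sup>2 + (x\<^sup>2 + y\<^sup>2 / 2 + ((x + y / 2) * (x - y / 2))\<^sup>2)"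
    by (simp add: power2_eq_square algebra_simps)
  then show ?thesis
    using decay_mult_le[of "x\<^sup>2" "x + y / 2" "x - y / 2"] by (simp add: decay_def)
qed

lemma decay_half_sum_mult_half_diff_le_snd: "decay (x + y / 2) * decay (x - y / 2) \<le> 2 * decay y"
proof -
  have "(1 + (x + y / 2)\<^sup>2) * (1 + (x - y / 2)\<^sup>2) = 1 + y\<^sup>2 / 2 + (2 * x\<^sup>2 + ((x + y / 2) * (x - y / 2))\<^sup>2)"
    by (simp add: power2_eq_square algebra_simps)
  then have "decay (x + y / 2) * decay (x - y / 2) \<le> inverse (1 + y\<^sup>2 / 2)"
    by (intro decay_mult_le) auto
  also have "\<dots> \<le> 2 * decay y"
    by (simp add: decay_def field_simps add_pos_nonneg)
  finally show ?thesis .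
qed

lemma decay_half_sum_mult_half_diff_cube_le:
  "(decay (x + y / 2) * decay (x - y / 2)) ^ 3 \<le> 2 * (decay x)\<^sup>2 * decay y"
proof -
  let ?d = "decay (x + y / 2) * decay (x - y / 2)"
  have "?d ^ 3 = ?d * ?d * ?d"
    by (simp add: power3_eq_cube)
  also have "\<dots> \<le> decay x * decay x * (2 * decay y)"
    by (intro decay_half_sum_mult_half_diff_le_fst decay_half_sum_mult_half_diff_le_snd mult_mono
        mult_nonneg_nonneg decay_nonneg)
  finally show ?thesis
    by (simp add: power2_eq_square mult_ac)
qed

lemma abs_mult_decay_cube_le: "\<bar>a\<bar> * decay a ^ 3 * decay b ^ 3 \<le> decay a * decay b"
proof -
  have "\<bar>a\<bar> * decay a ^ 3 * decay b ^ 3 = (\<bar>a\<bar> * decay a) * decay a * decay a * decay b * (decay b * decay b)"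
    by (simp add: power3_eq_cube mult_ac)
  also have "\<dots> \<le> 1 * 1 * decay a * decay b * 1"
    by (intro mult_mono abs_mult_decay_le_one decay_le_one mult_le_one mult_nonneg_nonneg decay_nonneg)
       simp_all
  finally show ?thesis
    by simp
qed

lemma schwartz_continuous:
  assumes "schwartz f"
  shows "continuous_on UNIV f"
proof -
  have "nderiv 0 f differentiable (at x)" for x
    using assms by (simp add: schwartz_def)
  then show ?thesis
    by (simp add: nderiv_def continuous_at_imp_continuous_on differentiable_imp_continuous_within)
qed

lemma schwartz_cubic_decay:
  assumes "schwartz f"
  obtains C where "\<And>t. norm (f t) \<le> C * decay t ^ 3"
proof -
  have bounded: "bounded (range (\<lambda>x. complex_of_real (x ^ m) * nderiv 0 f x))" for m
    using assms by (simp add: schwartz_def)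
  obtain B0 where B0: "\<And>t. norm (f t) \<le> B0"
    using bounded[of 0] by (auto simp: bounded_iff nderiv_def)
  obtain B6 where B6: "\<And>t. \<bar>t\<bar> ^ 6 * norm (f t) \<le> B6"
    using bounded[of 6] by (auto simp: bounded_iff nderiv_def norm_mult norm_power)
  show ?thesis
  proof
    fix t :: real
    have "(1 + t\<^sup>2) ^ 3 \<le> 4 * (1 + \<bar>t\<bar> ^ 6)"
    proof -
      have "4 * (1 + \<bar>t\<bar> ^ 6) - (1 + t\<^sup>2) ^ 3 = 3 * ((t\<^sup>2 - 1)\<^sup>2 * (t\<^sup>2 + 1))"
        by (simp add: power2_eq_square power3_eq_cube algebra_simps numeral_eq_Suc power_abs)
      moreover have "0 \<le> 3 * ((t\<^sup>2 - 1)\<^sup>2 * (t\<^sup>2 + 1))"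
        by simp
      ultimately show ?thesis
        by linarith
    qed
    from mult_right_mono[OF this norm_ge_zero[of "f t"]]
    have "(1 + t\<^sup>2) ^ 3 * norm (f t) \<le> 4 * (norm (f t) + \<bar>t\<bar> ^ 6 * norm (f t))"
      by (simp add: algebra_simps)
    also have "\<dots> \<le> 4 * (B0 + B6)"
      using B0[of t] B6[of t] by simp
    finally have "(1 + t\<^sup>2) ^ 3 * norm (f t) * decay t ^ 3 \<le> 4 * (B0 + B6) * decay t ^ 3"
      by (intro mult_right_mono) (simp_all add: decay_nonneg)
    then show "norm (f t) \<le> 4 * (B0 + B6) * decay t ^ 3"
      by (simp add: mult.commute[of _ "norm (f t)"] mult.assoc one_plus_sq_mult_decay
          flip: power_mult_distrib)
  qed
qed

section \<open>The integral of the squared sinc function\<close>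

lemma sinc_altdef: "sinc = (\<lambda>x. if x = 0 then 1 else sin x / x)"
  by (auto simp: sinc_def)

lemma borel_measurable_sinc_real [measurable]: "sinc \<in> borel_measurable borel"
  unfolding sinc_altdef by measurable

lemma sinc_minus [simp]: "sinc (- x) = sinc x"
  by (simp add: sinc_def)

lemma mult_sinc: "x * sinc x = sin x"
  by (simp add: sinc_def)

lemma sinc_sq_le_one: "(sinc x)\<^sup>2 \<le> 1"
proof -
  have "\<bar>sinc x\<bar> \<le> 1"
    by (auto simp: sinc_def abs_sin_x_le_abs_x divide_le_eq_1 abs_divide)
  then show ?thesis
    by (simp add: abs_square_le_1)
qed

lemma sq_mult_sinc_sq_le_one: "x\<^sup>2 * (sinc x)\<^sup>2 \<le> 1"
  by (simp flip: power_mult_distrib add: mult_sinc abs_square_le_1 abs_sin_le_one)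

lemma sinc_scaled_sq_le_decay: "x\<^sup>2 * (sinc (x * t))\<^sup>2 \<le> (1 + x\<^sup>2) * decay t"
proof -
  have "t\<^sup>2 * (x\<^sup>2 * (sinc (x * t))\<^sup>2) \<le> 1"
    using sq_mult_sinc_sq_le_one[of "x * t"] by (simp add: power_mult_distrib mult_ac)
  moreover have "x\<^sup>2 * (sinc (x * t))\<^sup>2 \<le> x\<^sup>2"
    using mult_left_mono[OF sinc_sq_le_one, of "x\<^sup>2"] by simp
  ultimately have "x\<^sup>2 * (sinc (x * t))\<^sup>2 * (1 + t\<^sup>2) \<le> 1 + x\<^sup>2"
    by (simp add: algebra_simps)
  from mult_right_mono[OF this decay_nonneg[of t]] show ?thesis
    by (simp add: mult.assoc one_plus_sq_mult_decay)
qed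

lemma integrable_sinc_sq: "integrable lborel (\<lambda>x. (sinc x)\<^sup>2)"
proof (rule Bochner_Integration.integrable_bound)
  show "integrable lborel (\<lambda>x. 2 * decay x)"
    by (intro integrable_mult_right integrable_decay)
  show "AE x in lborel. norm ((sinc x)\<^sup>2) \<le> norm (2 * decay x)"
    using sinc_scaled_sq_le_decay[of 1] by (auto simp: decay_nonneg)
qed simp

lemma interval_integral_sinc_sq: "(LBINT x=0..\<infinity>. (sinc x)\<^sup>2) = pi / 2"
proof -
  define F where "F T = Si (2 * T) - (sin T)\<^sup>2 / T" for T :: real
  have deriv: "(F has_real_derivative (sinc T)\<^sup>2) (at T)" if "0 < T" for T
  proof -
    have "(F has_real_derivative (sin (2 * T) / (2 * T)) * 2 - (2 * sin T * cos T * T - (sin T)\<^sup>2) / T\<^sup>2) (at T)"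
      unfolding F_def using that
      by (auto intro!: derivative_eq_intros DERIV_chain2[OF DERIV_Si]
               simp: power2_eq_square field_simps)
    moreover have "(sin (2 * T) / (2 * T)) * 2 - (2 * sin T * cos T * T - (sin T)\<^sup>2) / T\<^sup>2 = (sinc T)\<^sup>2"
      using that by (simp add: sinc_def sin_double) (simp add: power2_eq_square field_simps)
    ultimately show ?thesis
      by simp
  qed
  have "((\<lambda>T. Si (2 * T) - sin T * (sin T / T)) \<longlongrightarrow> Si (2 * 0) - sin 0 * 1) (at_right 0)"
    by (intro tendsto_intros isCont_tendsto_compose[OF isCont_Si]
          tendsto_mono[OF at_within_le_at sinc_at_0])
  then have lim0: "(F \<longlongrightarrow> 0) (at_right 0)"
    by (simp add: F_def[abs_def] power2_eq_square Si_def zero_ereal_def[symmetric])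
  have "((\<lambda>T::real. (sin T)\<^sup>2 / T) \<longlongrightarrow> 0) at_top"
  proof (rule tendsto_sandwich)
    show "\<forall>\<^sub>F T in at_top. 0 \<le> (sin T)\<^sup>2 / (T::real)"
      using eventually_gt_at_top[of "0::real"] by eventually_elim simp
    show "\<forall>\<^sub>F T in at_top. (sin T)\<^sup>2 / T \<le> inverse (T::real)"
      using eventually_gt_at_top[of "0::real"]
      by eventually_elim (simp add: divide_right_mono inverse_eq_divide abs_square_le_1 abs_sin_le_one)
  qed (auto intro: tendsto_inverse_0_at_top filterlim_ident)
  moreover have "((\<lambda>T. Si (2 * T)) \<longlongrightarrow> pi / 2) at_top"
    by (rule filterlim_compose[OF Si_at_top])
       (intro filterlim_tendsto_pos_mult_at_top tendsto_const filterlim_ident, auto)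
  ultimately have "(F \<longlongrightarrow> pi / 2 - 0) at_top"
    unfolding F_def by (intro tendsto_diff)
  with deriv lim0 have "(LBINT x=ereal 0..\<infinity>. (sinc x)\<^sup>2) = pi / 2 - 0"
    by (intro interval_integral_FTC_nonneg[where F=F])
       (auto simp: ereal_tendsto_simps sinc_altdef isCont_sinc intro!: continuous_intros)
  then show ?thesis
    by (simp add: zero_ereal_def)
qed

lemma integral_sinc_sq: "(\<integral>x. (sinc x)\<^sup>2 \<partial>lborel) = pi"
proof -
  have int: "interval_lebesgue_integrable lborel (-\<infinity>) \<infinity> (\<lambda>x. (sinc x)\<^sup>2)"
    using integrable_sinc_sq by (simp add: interval_lebesgue_integrable_def set_integrable_def)
  have "(LBINT x=-\<infinity>..\<infinity>. (sinc x)\<^sup>2) = (LBINT x=-\<infinity>..0. (sinc x)\<^sup>2) + (LBINT x=0..\<infinity>. (sinc x)\<^sup>2)"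
    by (rule interval_integral_sum[symmetric]) (use int in simp)
  also have "(LBINT x=-\<infinity>..0. (sinc x)\<^sup>2) = (LBINT x=0..\<infinity>. (sinc x)\<^sup>2)"
    by (subst interval_integral_reflect) simp
  finally have "(LBINT x=-\<infinity>..\<infinity>. (sinc x)\<^sup>2) = pi"
    by (simp add: interval_integral_sinc_sq)
  then show ?thesis
    by (simp add: interval_lebesgue_integral_def set_lebesgue_integral_def)
qed

lemma has_bochner_integral_sinc_sq_scaled:
  assumes "a \<noteq> 0"
  shows "has_bochner_integral lborel (\<lambda>t. (sinc (a * t))\<^sup>2) (pi / \<bar>a\<bar>)"
  using lborel_integrable_real_affine[OF integrable_sinc_sq assms, of 0]
    lborel_integral_real_affine[OF assms, of "\<lambda>x. (sinc x)\<^sup>2" 0] assms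
  by (simp add: has_bochner_integral_iff integral_sinc_sq field_simps)

section \<open>Fourier transform of the symbol in the frequency variable\<close>

definition fejer :: "real \<Rightarrow> real \<Rightarrow> real" where
  "fejer c t = c\<^sup>2 / 2 * (sinc (c / 2 * t))\<^sup>2"

lemma fejer_mult_sq: "fejer c t * t\<^sup>2 = 2 * (sin (c * t / 2))\<^sup>2"
proof -
  have "fejer c t * t\<^sup>2 = 2 * (c / 2 * t * sinc (c / 2 * t))\<^sup>2"
    by (simp add: fejer_def power_mult_distrib field_simps)
  then show ?thesis
    by (simp add: mult_sinc mult.commute)
qed

lemma has_bochner_integral_fejer: "has_bochner_integral lborel (fejer c) (pi * \<bar>c\<bar>)"
proof (cases "c = 0")
  case True
  then show ?thesis
    by (simp add: fejer_def[abs_def] has_bochner_integral_zero)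
next
  case False
  then have "has_bochner_integral lborel (\<lambda>t. c\<^sup>2 / 2 * (sinc (c / 2 * t))\<^sup>2) (c\<^sup>2 / 2 * (pi / \<bar>c / 2\<bar>))"
    by (intro has_bochner_integral_mult_right has_bochner_integral_sinc_sq_scaled) simp
  moreover have "c\<^sup>2 / 2 * (pi / \<bar>c / 2\<bar>) = pi * \<bar>c\<bar>"
  proof -
    have "c\<^sup>2 = \<bar>c\<bar> * \<bar>c\<bar>"
      by (simp add: power2_eq_square)
    then show ?thesis
      using False by (simp add: field_simps)
  qed
  ultimately show ?thesis
    by (simp add: fejer_def[abs_def])
qed

lemma sin_sq_mult_cos_double:
  fixes u v :: real
  shows "(sin u)\<^sup>2 * cos (2 * v) = ((sin (u + v))\<^sup>2 + (sin (u - v))\<^sup>2) / 2 - (sin v)\<^sup>2"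
proof -
  have sum: "(sin (u + v))\<^sup>2 + (sin (u - v))\<^sup>2 = 2 * ((sin u)\<^sup>2 * (cos v)\<^sup>2 + (cos u)\<^sup>2 * (sin v)\<^sup>2)"
    by (simp add: sin_add sin_diff power2_eq_square algebra_simps)
  have cos2: "cos (2 * v) = (cos v)\<^sup>2 - (sin v)\<^sup>2"
    by (rule cos_double)
  show ?thesis
    unfolding sum cos2 cos_squared_eq by (simp add: algebra_simps)
qed

lemma sinc_sq_cos_eq_fejer:
  "x\<^sup>2 * (sinc (x * t))\<^sup>2 * cos (y * t) = (fejer (2 * x + y) t + fejer (2 * x - y) t) / 4 - fejer y t / 2"
proof (cases "t = 0")
  case True
  then show ?thesis
    by (simp add: fejer_def sinc_def power2_eq_square field_simps)
next
  case False
  have "(x\<^sup>2 * (sinc (x * t))\<^sup>2 * cos (y * t)) * t\<^sup>2 = (sin (x * t))\<^sup>2 * cos (2 * (y * t / 2))"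
    using arg_cong[OF mult_sinc[of "x * t"], of "\<lambda>s. s\<^sup>2"] by (simp add: power_mult_distrib algebra_simps)
  also have "\<dots> = ((sin (x * t + y * t / 2))\<^sup>2 + (sin (x * t - y * t / 2))\<^sup>2) / 2 - (sin (y * t / 2))\<^sup>2"
    by (rule sin_sq_mult_cos_double)
  also have "\<dots> = ((fejer (2 * x + y) t + fejer (2 * x - y) t) / 4 - fejer y t / 2) * t\<^sup>2"
    using fejer_mult_sq[of "2 * x + y" t] fejer_mult_sq[of "2 * x - y" t] fejer_mult_sq[of y t]
    by (simp add: algebra_simps add_divide_distrib diff_divide_distrib)
  finally show ?thesis
    using False by simp
qed

lemma has_bochner_integral_sinc_sq_cos:
  "has_bochner_integral lborel (\<lambda>t. 2 * x\<^sup>2 * (sinc (x * t))\<^sup>2 * cos (y * t))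
     (pi / 2 * (\<bar>2 * x + y\<bar> + \<bar>2 * x - y\<bar>) - pi * \<bar>y\<bar>)"
proof -
  have "has_bochner_integral lborel
      (\<lambda>t. 2 * ((fejer (2 * x + y) t + fejer (2 * x - y) t) / 4 - fejer y t / 2))
      (2 * ((pi * \<bar>2 * x + y\<bar> + pi * \<bar>2 * x - y\<bar>) / 4 - pi * \<bar>y\<bar> / 2))"
    by (intro has_bochner_integral_mult_right has_bochner_integral_diff has_bochner_integral_divide
        has_bochner_integral_add has_bochner_integral_fejer)
  moreover have "(\<lambda>t. 2 * x\<^sup>2 * (sinc (x * t))\<^sup>2 * cos (y * t)) =
      (\<lambda>t. 2 * ((fejer (2 * x + y) t + fejer (2 * x - y) t) / 4 - fejer y t / 2))"
    by (simp only: mult.assoc[of 2] sinc_sq_cos_eq_fejer)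
  moreover have "2 * ((pi * \<bar>2 * x + y\<bar> + pi * \<bar>2 * x - y\<bar>) / 4 - pi * \<bar>y\<bar> / 2) =
      pi / 2 * (\<bar>2 * x + y\<bar> + \<bar>2 * x - y\<bar>) - pi * \<bar>y\<bar>"
    by (simp add: algebra_simps)
  ultimately show ?thesis
    by (simp only:)
qed

lemma integral_odd_eq_zero:
  fixes g :: "real \<Rightarrow> real"
  assumes "\<And>t. g (- t) = - g t"
  shows "(\<integral>t. g t \<partial>lborel) = 0"
proof -
  have "(\<integral>t. g t \<partial>lborel) = \<bar>-1\<bar> *\<^sub>R (\<integral>t. g (0 + -1 * t) \<partial>lborel)"
    by (rule lborel_integral_real_affine) simp
  also have "\<dots> = - (\<integral>t. g t \<partial>lborel)"
    by (simp add: assms)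
  finally show ?thesis
    by simp
qed

lemma has_bochner_integral_sinc_sq_sin:
  "has_bochner_integral lborel (\<lambda>t. 2 * x\<^sup>2 * (sinc (x * t))\<^sup>2 * sin (y * t)) 0"
proof -
  have "integrable lborel (\<lambda>t. 2 * x\<^sup>2 * (sinc (x * t))\<^sup>2 * sin (y * t))"
  proof (rule Bochner_Integration.integrable_bound)
    show "integrable lborel (fejer (2 * x))"
      using has_bochner_integral_fejer has_bochner_integral_iff by blast
    show "AE t in lborel. norm (2 * x\<^sup>2 * (sinc (x * t))\<^sup>2 * sin (y * t)) \<le> norm (fejer (2 * x) t)"
    proof (rule AE_I2)
      fix t
      have "fejer (2 * x) t = 2 * x\<^sup>2 * (sinc (x * t))\<^sup>2"
        by (simp add: fejer_def power2_eq_square)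
      then show "norm (2 * x\<^sup>2 * (sinc (x * t))\<^sup>2 * sin (y * t)) \<le> norm (fejer (2 * x) t)"
        by (simp add: abs_mult mult_left_le abs_sin_le_one)
    qed
  qed measurable
  moreover have "(\<integral>t. 2 * x\<^sup>2 * (sinc (x * t))\<^sup>2 * sin (y * t) \<partial>lborel) = 0"
    by (rule integral_odd_eq_zero) simp
  ultimately show ?thesis
    by (simp add: has_bochner_integral_iff)
qed

definition brownian_symbol :: "real \<Rightarrow> real \<Rightarrow> complex" where
  "brownian_symbol x \<xi> = complex_of_real (2 * x\<^sup>2 * (sinc (x * \<xi>))\<^sup>2 * heaviside x)"

lemma borel_measurable_brownian_symbol [measurable]:
  assumes [measurable]: "f \<in> borel_measurable M" "g \<in> borel_measurable M"
  shows "(\<lambda>p. brownian_symbol (f p) (g p)) \<in> borel_measurable M"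
  unfolding brownian_symbol_def heaviside_def by measurable

lemma norm_brownian_symbol_le: "norm (brownian_symbol x \<xi>) \<le> 2 * (1 + x\<^sup>2) * decay \<xi>"
  using sinc_scaled_sq_le_decay[of x \<xi>]
  unfolding brownian_symbol_def norm_of_real by (simp add: heaviside_def decay_nonneg algebra_simps)

lemma kb_half_sum_diff: "kb (x + y / 2) (x - y / 2) = (if 0 \<le> x then max 0 (x - \<bar>y\<bar> / 2) else 0)"
  by (auto simp: kb_def min_def max_def abs_if)

lemma has_bochner_integral_brownian_symbol_cis:
  "has_bochner_integral lborel (\<lambda>\<xi>. brownian_symbol x \<xi> * cis (y * \<xi>))
     (2 * pi * kb (x + y / 2) (x - y / 2))"
proof (cases "0 \<le> x")
  case True
  have "has_bochner_integral lborel
      (\<lambda>t. complex_of_real (2 * x\<^sup>2 * (sinc (x * t))\<^sup>2 * cos (y * t)) +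
           \<i> * complex_of_real (2 * x\<^sup>2 * (sinc (x * t))\<^sup>2 * sin (y * t)))
      (complex_of_real (pi / 2 * (\<bar>2 * x + y\<bar> + \<bar>2 * x - y\<bar>) - pi * \<bar>y\<bar>) + \<i> * complex_of_real 0)"
    by (intro has_bochner_integral_add has_bochner_integral_mult_right has_bochner_integral_of_real
          has_bochner_integral_sinc_sq_cos has_bochner_integral_sinc_sq_sin)
  moreover have "complex_of_real (2 * x\<^sup>2 * (sinc (x * t))\<^sup>2 * cos (y * t)) +
      \<i> * complex_of_real (2 * x\<^sup>2 * (sinc (x * t))\<^sup>2 * sin (y * t)) =
      brownian_symbol x t * cis (y * t)" for t
    using True by (simp add: brownian_symbol_def heaviside_def cis_conv_exp Euler algebra_simps)
  moreover have "complex_of_real (pi / 2 * (\<bar>2 * x + y\<bar> + \<bar>2 * x - y\<bar>) - pi * \<bar>y\<bar>) + \<i> * complex_of_real 0 =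
      2 * pi * kb (x + y / 2) (x - y / 2)"
  proof -
    have "\<bar>2 * x + y\<bar> + \<bar>2 * x - y\<bar> = 2 * max (2 * x) \<bar>y\<bar>"
      using True by (simp add: abs_if max_def)
    then have "pi / 2 * (\<bar>2 * x + y\<bar> + \<bar>2 * x - y\<bar>) - pi * \<bar>y\<bar> = 2 * pi * max 0 (x - \<bar>y\<bar> / 2)"
      by (simp add: max_def algebra_simps)
    then show ?thesis
      using True by (simp add: kb_half_sum_diff)
  qed
  ultimately show ?thesis
    by (simp only:)
next
  case False
  then show ?thesis
    by (simp add: brownian_symbol_def heaviside_def kb_half_sum_diff has_bochner_integral_zero)
qed

section \<open>Integrability on the plane and the change of variables\<close>

lemma (in pair_sigma_finite) integrable_product_mult:
  fixes u v :: "_ \<Rightarrow> real"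
  assumes u: "integrable M1 u" and v: "integrable M2 v"
  shows "integrable (M1 \<Otimes>\<^sub>M M2) (\<lambda>p. u (fst p) * v (snd p))"
proof -
  have [measurable]: "u \<in> borel_measurable M1" "v \<in> borel_measurable M2"
    using u v by auto
  have "(\<integral>\<^sup>+p. ennreal (norm (u (fst p) * v (snd p))) \<partial>(M1 \<Otimes>\<^sub>M M2))
      = (\<integral>\<^sup>+x. \<integral>\<^sup>+y. ennreal (norm (u x)) * ennreal (norm (v y)) \<partial>M2 \<partial>M1)"
    by (subst M2.nn_integral_fst[symmetric]) (auto intro!: nn_integral_cong simp: abs_mult ennreal_mult)
  also have "\<dots> = (\<integral>\<^sup>+x. ennreal (norm (u x)) \<partial>M1) * (\<integral>\<^sup>+y. ennreal (norm (v y)) \<partial>M2)"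
    by (simp add: nn_integral_cmult nn_integral_multc)
  also have "\<dots> < \<infinity>"
    using u v by (auto simp: integrable_iff_bounded ennreal_mult_less_top)
  finally show ?thesis
    by (auto simp: integrable_iff_bounded)
qed

lemma (in pair_sigma_finite) integrable_product_bound:
  fixes F :: "_ \<Rightarrow> 'c::{banach, second_countable_topology}"
  assumes "integrable M1 u" "integrable M2 v" "F \<in> borel_measurable (M1 \<Otimes>\<^sub>M M2)"
    and "\<And>x y. norm (F (x, y)) \<le> u x * v y"
  shows "integrable (M1 \<Otimes>\<^sub>M M2) F"
  using assms(3,4)
  by (intro Bochner_Integration.integrable_bound[OF integrable_product_mult[OF assms(1,2)]])
     (auto intro!: AE_I2 order_trans[OF _ abs_ge_self])

lemma integrable_lborel_decay_mult_decay:
  "integrable (lborel :: (real \<times> real) measure) (\<lambda>p. decay (fst p) * decay (snd p))"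
  using lborel_pair.integrable_product_mult[OF integrable_decay integrable_decay]
  by (simp add: lborel_prod)

lemma nn_integral_half_sum_diff:
  fixes F :: "real \<times> real \<Rightarrow> ennreal"
  assumes [measurable]: "F \<in> borel_measurable (lborel \<Otimes>\<^sub>M lborel)"
  shows "(\<integral>\<^sup>+p. F (fst p + snd p / 2, fst p - snd p / 2) \<partial>(lborel \<Otimes>\<^sub>M lborel))
    = integral\<^sup>N (lborel \<Otimes>\<^sub>M lborel) F"
proof -
  \<comment> \<open>substitute \<open>y = 2 x - 2 b\<close> in the inner integral, swap, then substitute \<open>a = 2 x - b\<close>\<close>
  have affine: "(\<integral>\<^sup>+y. g y \<partial>lborel) = 2 * (\<integral>\<^sup>+x. g (t + c * x) \<partial>lborel)"
    if [measurable]: "g \<in> borel_measurable borel" and "\<bar>c\<bar> = 2" for g :: "real \<Rightarrow> ennreal" and t c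
    using nn_integral_real_affine[of g c t] that by auto
  have "(\<integral>\<^sup>+p. F (fst p + snd p / 2, fst p - snd p / 2) \<partial>(lborel \<Otimes>\<^sub>M lborel))
      = (\<integral>\<^sup>+x. \<integral>\<^sup>+y. F (x + y / 2, x - y / 2) \<partial>lborel \<partial>lborel)"
    using lborel.nn_integral_fst[where f="\<lambda>p. F (fst p + snd p / 2, fst p - snd p / 2)"] by simp
  also have "\<dots> = (\<integral>\<^sup>+x. \<integral>\<^sup>+b. 2 * F (2 * x - b, b) \<partial>lborel \<partial>lborel)"
  proof (rule nn_integral_cong)
    fix x :: real
    have "(\<integral>\<^sup>+y. F (x + y / 2, x - y / 2) \<partial>lborel)
        = 2 * (\<integral>\<^sup>+b. F (x + (2 * x + -2 * b) / 2, x - (2 * x + -2 * b) / 2) \<partial>lborel)"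
      by (rule affine) auto
    moreover have "x + (2 * x + -2 * b) / 2 = 2 * x - b" "x - (2 * x + -2 * b) / 2 = b" for b
      by (simp_all add: field_simps)
    ultimately show "(\<integral>\<^sup>+y. F (x + y / 2, x - y / 2) \<partial>lborel) = (\<integral>\<^sup>+b. 2 * F (2 * x - b, b) \<partial>lborel)"
      by (simp only:) (simp add: nn_integral_cmult)
  qed
  also have "\<dots> = (\<integral>\<^sup>+b. \<integral>\<^sup>+x. 2 * F (2 * x - b, b) \<partial>lborel \<partial>lborel)"
    by (rule lborel_pair.Fubini') measurable
  also have "\<dots> = (\<integral>\<^sup>+b. \<integral>\<^sup>+a. F (a, b) \<partial>lborel \<partial>lborel)"
  proof (rule nn_integral_cong)
    fix b :: real
    have "(\<integral>\<^sup>+a. F (a, b) \<partial>lborel) = 2 * (\<integral>\<^sup>+x. F (- b + 2 * x, b) \<partial>lborel)"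
      by (rule affine) auto
    then show "(\<integral>\<^sup>+x. 2 * F (2 * x - b, b) \<partial>lborel) = (\<integral>\<^sup>+a. F (a, b) \<partial>lborel)"
      by (simp add: nn_integral_cmult algebra_simps)
  qed
  also have "\<dots> = integral\<^sup>N (lborel \<Otimes>\<^sub>M lborel) F"
    by (simp add: lborel_pair.nn_integral_snd)
  finally show ?thesis .
qed

lemma distr_half_sum_diff:
  "distr (lborel \<Otimes>\<^sub>M lborel) (lborel \<Otimes>\<^sub>M lborel) (\<lambda>p::real \<times> real. (fst p + snd p / 2, fst p - snd p / 2))
    = lborel \<Otimes>\<^sub>M lborel"
proof (rule measure_eqI)
  fix A :: "(real \<times> real) set"
  assume "A \<in> sets (distr (lborel \<Otimes>\<^sub>M lborel) (lborel \<Otimes>\<^sub>M lborel)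
    (\<lambda>p. (fst p + snd p / 2, fst p - snd p / 2)))"
  then have A [measurable]: "A \<in> sets (lborel \<Otimes>\<^sub>M lborel)"
    by simp
  let ?T = "\<lambda>p::real \<times> real. (fst p + snd p / 2, fst p - snd p / 2)"
  have "emeasure (distr (lborel \<Otimes>\<^sub>M lborel) (lborel \<Otimes>\<^sub>M lborel) ?T) A
      = (\<integral>\<^sup>+p. indicator A (?T p) \<partial>(lborel \<Otimes>\<^sub>M lborel))"
    by (subst emeasure_distr, measurable, subst nn_integral_indicator[symmetric], measurable)
       (auto intro!: nn_integral_cong split: split_indicator)
  also have "\<dots> = emeasure (lborel \<Otimes>\<^sub>M lborel) A"
    using nn_integral_half_sum_diff[of "indicator A"] nn_integral_indicator[OF A] by simp
  finally show "emeasure (distr (lborel \<Otimes>\<^sub>M lborel) (lborel \<Otimes>\<^sub>M lborel) ?T) A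
      = emeasure (lborel \<Otimes>\<^sub>M lborel) A" .
qed simp

lemma
  fixes F :: "real \<times> real \<Rightarrow> 'a::{banach, second_countable_topology}"
  assumes "integrable (lborel \<Otimes>\<^sub>M lborel) F"
  shows integrable_half_sum_diff:
      "integrable (lborel \<Otimes>\<^sub>M lborel) (\<lambda>p. F (fst p + snd p / 2, fst p - snd p / 2))"
    and integral_half_sum_diff:
      "(\<integral>p. F (fst p + snd p / 2, fst p - snd p / 2) \<partial>(lborel \<Otimes>\<^sub>M lborel))
        = integral\<^sup>L (lborel \<Otimes>\<^sub>M lborel) F"
proof -
  let ?T = "\<lambda>p::real \<times> real. (fst p + snd p / 2, fst p - snd p / 2)"
  have T: "?T \<in> lborel \<Otimes>\<^sub>M lborel \<rightarrow>\<^sub>M lborel \<Otimes>\<^sub>M lborel"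
    by measurable
  have F: "F \<in> borel_measurable (lborel \<Otimes>\<^sub>M lborel)"
    using assms by (rule borel_measurable_integrable)
  show "integrable (lborel \<Otimes>\<^sub>M lborel) (\<lambda>p. F (fst p + snd p / 2, fst p - snd p / 2))"
    using integrable_distr_eq[OF T F] assms by (simp add: distr_half_sum_diff)
  show "(\<integral>p. F (fst p + snd p / 2, fst p - snd p / 2) \<partial>(lborel \<Otimes>\<^sub>M lborel))
        = integral\<^sup>L (lborel \<Otimes>\<^sub>M lborel) F"
    using integral_distr[OF T F] by (simp add: distr_half_sum_diff)
qed

lemma cnj_wigner:
  "cnj (wigner g f x \<xi>) = complex_of_real (1 / sqrt (2 * pi)) *
     (\<integral>y. cnj (g (x + y / 2)) * f (x - y / 2) * cis (y * \<xi>) \<partial>lborel)"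
proof -
  have "cnj (\<integral>y. g (x + y / 2) * cnj (f (x - y / 2)) * cis (- (y * \<xi>)) \<partial>lborel)
      = (\<integral>y. cnj (g (x + y / 2) * cnj (f (x - y / 2)) * cis (- (y * \<xi>))) \<partial>lborel)"
    by (rule Bochner_Integration.integral_cnj[symmetric])
  then show ?thesis
    unfolding wigner_def by (simp add: cis_cnj)
qed

lemma borel_measurable_cis [measurable]: "cis \<in> borel_measurable borel"
  by (intro borel_measurable_continuous_onI continuous_intros)

lemma borel_measurable_cnj [measurable]: "(cnj :: complex \<Rightarrow> complex) \<in> borel_measurable borel"
  by (intro borel_measurable_continuous_onI continuous_intros)

lemma borel_measurable_kb [measurable]:
  assumes [measurable]: "f \<in> borel_measurable M" "g \<in> borel_measurable M"
  shows "(\<lambda>p. kb (f p) (g p)) \<in> borel_measurable M"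
  unfolding kb_def by measurable

lemma norm_kb_le: "norm (kb a b) \<le> \<bar>a\<bar>"
  by (auto simp: kb_def min_def)

lemma norm_brownian_symbol_mult_le:
  assumes "norm z \<le> C * (decay (x + y / 2) * decay (x - y / 2)) ^ 3"
  shows "norm (brownian_symbol x \<xi> * z) \<le> 4 * C * decay x * decay \<xi> * decay y"
proof -
  have "0 < (decay (x + y / 2) * decay (x - y / 2)) ^ 3"
    by (simp add: decay_pos)
  with order_trans[OF norm_ge_zero assms] have "0 \<le> C"
    by (simp add: zero_le_mult_iff)
  have "norm (brownian_symbol x \<xi> * z) \<le> (2 * (1 + x\<^sup>2) * decay \<xi>) * (C * (2 * (decay x)\<^sup>2 * decay y))"
    unfolding norm_mult
    by (intro mult_mono norm_brownian_symbol_le order_trans[OF assms] mult_left_mono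
        decay_half_sum_mult_half_diff_cube_le \<open>0 \<le> C\<close>) (simp_all add: decay_nonneg)
  also have "\<dots> = 4 * C * ((1 + x\<^sup>2) * decay x) * decay x * decay \<xi> * decay y"
    by (simp add: power2_eq_square mult_ac)
  finally show ?thesis
    by (simp add: one_plus_sq_mult_decay)
qed

lemma
  fixes u :: "real \<times> real \<Rightarrow> complex"
  assumes u [measurable]: "u \<in> borel_measurable borel"
    and bound: "\<And>a b. norm (u (a, b)) \<le> C * (decay a * decay b) ^ 3"
  shows integrable_brownian_symbol_mult_shifted:
      "integrable ((lborel :: (real \<times> real) measure) \<Otimes>\<^sub>M lborel)
         (\<lambda>(p, y). brownian_symbol (fst p) (snd p) * (u (fst p + y / 2, fst p - y / 2) * cis (y * snd p)))"
    and integrable_brownian_symbol_mult_shifted_at: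
      "integrable (lborel \<Otimes>\<^sub>M lborel)
         (\<lambda>(x, \<xi>). brownian_symbol x \<xi> * (u (x + y / 2, x - y / 2) * cis (y * \<xi>)))"
proof -
  have [measurable]: "u \<in> borel_measurable (borel \<Otimes>\<^sub>M borel)"
    by (simp add: borel_prod)
  have bound': "norm (brownian_symbol x \<xi> * (u (x + y / 2, x - y / 2) * cis (y * \<xi>)))
      \<le> 4 * C * decay x * decay \<xi> * decay y" for x \<xi> y
    by (rule norm_brownian_symbol_mult_le) (simp add: norm_mult bound)
  show "integrable ((lborel :: (real \<times> real) measure) \<Otimes>\<^sub>M lborel)
      (\<lambda>(p, y). brownian_symbol (fst p) (snd p) * (u (fst p + y / 2, fst p - y / 2) * cis (y * snd p)))"
  proof (rule lborel_pair.integrable_product_bound)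
    show "integrable lborel (\<lambda>p::real \<times> real. 4 * C * decay (fst p) * decay (snd p))"
      using integrable_mult_right[OF integrable_lborel_decay_mult_decay, of "4 * C"]
      by (simp add: mult.assoc)
    show "(\<lambda>(p, y). brownian_symbol (fst p) (snd p) * (u (fst p + y / 2, fst p - y / 2) * cis (y * snd p)))
        \<in> borel_measurable (lborel \<Otimes>\<^sub>M lborel)"
      unfolding lborel_prod[symmetric] by measurable
  qed (use bound' integrable_decay in simp_all)
  show "integrable (lborel \<Otimes>\<^sub>M lborel)
      (\<lambda>(x, \<xi>). brownian_symbol x \<xi> * (u (x + y / 2, x - y / 2) * cis (y * \<xi>)))"
    by (rule lborel_pair.integrable_product_bound[OF
          integrable_mult_right[OF integrable_decay, where c="4 * C * decay y"] integrable_decay])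
       (use bound' in \<open>simp_all add: mult_ac\<close>)
qed

lemma integrable_kb_mult:
  fixes u :: "real \<times> real \<Rightarrow> complex"
  assumes u [measurable]: "u \<in> borel_measurable borel"
    and bound: "\<And>a b. norm (u (a, b)) \<le> C * (decay a * decay b) ^ 3"
  shows "integrable (lborel \<Otimes>\<^sub>M lborel) (\<lambda>p. kb (fst p) (snd p) * u p)"
proof (rule lborel_pair.integrable_product_bound[OF
      integrable_mult_right[OF integrable_decay, where c=C] integrable_decay])
  have [measurable]: "u \<in> borel_measurable (borel \<Otimes>\<^sub>M borel)"
    by (simp add: borel_prod)
  show "(\<lambda>p. kb (fst p) (snd p) * u p) \<in> borel_measurable (lborel \<Otimes>\<^sub>M lborel)"
    by measurable
  fix a b :: real
  have "norm (kb a b * u (a, b)) \<le> \<bar>a\<bar> * (C * (decay a * decay b) ^ 3)"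
    unfolding norm_mult by (intro mult_mono norm_kb_le bound) simp_all
  also have "\<dots> = C * (\<bar>a\<bar> * decay a ^ 3 * decay b ^ 3)"
    by (simp add: power_mult_distrib mult_ac)
  also have "\<dots> \<le> C * (decay a * decay b)"
    using order_trans[OF norm_ge_zero bound[of 0 0]]
    by (intro mult_left_mono abs_mult_decay_cube_le) (simp add: zero_le_mult_iff decay_def)
  finally show "norm (kb (fst (a, b)) (snd (a, b)) * u (a, b)) \<le> C * decay a * decay b"
    by (simp add: mult.assoc)
qed

lemma integral_brownian_symbol_mult_fourier:
  fixes u :: "real \<times> real \<Rightarrow> complex"
  assumes u [measurable]: "u \<in> borel_measurable borel"
    and bound: "\<And>a b. norm (u (a, b)) \<le> C * (decay a * decay b) ^ 3"
  shows "(\<integral>p. brownian_symbol (fst p) (snd p) *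
            (\<integral>y. u (fst p + y / 2, fst p - y / 2) * cis (y * snd p) \<partial>lborel) \<partial>lborel)
       = 2 * pi * (\<integral>p. kb (fst p) (snd p) * u p \<partial>lborel)"
proof -
  define H where "H p y = brownian_symbol (fst p) (snd p) * (u (fst p + y / 2, fst p - y / 2) * cis (y * snd p))"
    for p :: "real \<times> real" and y :: real
  define \<Phi> where "\<Phi> p = kb (fst p) (snd p) * u p" for p :: "real \<times> real"
  have "(\<integral>p. brownian_symbol (fst p) (snd p) *
            (\<integral>y. u (fst p + y / 2, fst p - y / 2) * cis (y * snd p) \<partial>lborel) \<partial>lborel)
      = (\<integral>p. \<integral>y. H p y \<partial>lborel \<partial>lborel)"
    by (simp add: H_def)
  also have "\<dots> = (\<integral>y. \<integral>p. H p y \<partial>lborel \<partial>lborel)"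
    using lborel_pair.Fubini_integral[of H] integrable_brownian_symbol_mult_shifted[OF u bound]
    by (simp add: H_def case_prod_beta')
  also have "\<dots> = (\<integral>y. \<integral>x. \<integral>\<xi>. H (x, \<xi>) y \<partial>lborel \<partial>lborel \<partial>lborel)"
    using lborel_pair.integral_fst[OF integrable_brownian_symbol_mult_shifted_at[OF u bound]]
    by (simp add: H_def lborel_prod case_prod_beta')
  also have "\<dots> = (\<integral>y. \<integral>x. 2 * pi * \<Phi> (x + y / 2, x - y / 2) \<partial>lborel \<partial>lborel)"
  proof (intro Bochner_Integration.integral_cong refl)
    fix x y :: real
    have "H (x, \<xi>) y = u (x + y / 2, x - y / 2) * (brownian_symbol x \<xi> * cis (y * \<xi>))" for \<xi>
      by (simp add: H_def mult.left_commute)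
    then have "(\<integral>\<xi>. H (x, \<xi>) y \<partial>lborel)
        = u (x + y / 2, x - y / 2) * (\<integral>\<xi>. brownian_symbol x \<xi> * cis (y * \<xi>) \<partial>lborel)"
      by simp
    also have "\<dots> = 2 * pi * \<Phi> (x + y / 2, x - y / 2)"
      using has_bochner_integral_brownian_symbol_cis[of x y]
      by (simp add: has_bochner_integral_iff \<Phi>_def mult.commute mult.left_commute)
    finally show "(\<integral>\<xi>. H (x, \<xi>) y \<partial>lborel) = 2 * pi * \<Phi> (x + y / 2, x - y / 2)" .
  qed
  also have "\<dots> = 2 * pi * (\<integral>p. \<Phi> (fst p + snd p / 2, fst p - snd p / 2) \<partial>(lborel \<Otimes>\<^sub>M lborel))"
    using lborel_pair.integral_snd[of "\<lambda>x y. \<Phi> (x + y / 2, x - y / 2)"]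
      integrable_half_sum_diff[OF integrable_kb_mult[OF u bound]]
    by (simp add: \<Phi>_def case_prod_beta')
  also have "\<dots> = 2 * pi * (\<integral>p. \<Phi> p \<partial>lborel)"
    using integral_half_sum_diff[OF integrable_kb_mult[OF u bound]] by (simp add: \<Phi>_def lborel_prod)
  finally show ?thesis
    by (simp add: \<Phi>_def)
qed

lemma is_weyl_symbol_brownian_symbol: "is_weyl_symbol brownian_symbol kb"
  unfolding is_weyl_symbol_def
proof (intro allI impI)
  fix f g :: "real \<Rightarrow> complex"
  assume "schwartz f" "schwartz g"
  obtain Cf where Cf: "\<And>t. norm (f t) \<le> Cf * decay t ^ 3"
    using schwartz_cubic_decay[OF \<open>schwartz f\<close>] by blast
  obtain Cg where Cg: "\<And>t. norm (g t) \<le> Cg * decay t ^ 3"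
    using schwartz_cubic_decay[OF \<open>schwartz g\<close>] by blast
  note [measurable] = borel_measurable_continuous_on[OF schwartz_continuous[OF \<open>schwartz f\<close>]]
    borel_measurable_continuous_on[OF schwartz_continuous[OF \<open>schwartz g\<close>]]
  define u where "u p = cnj (g (fst p)) * f (snd p)" for p
  have u: "u \<in> borel_measurable borel"
    unfolding u_def borel_prod[symmetric] by measurable
  have bound: "norm (u (a, b)) \<le> (Cg * Cf) * (decay a * decay b) ^ 3" for a b
  proof -
    have "norm (u (a, b)) \<le> (Cg * decay a ^ 3) * (Cf * decay b ^ 3)"
      unfolding u_def norm_mult complex_mod_cnj fst_conv snd_conv
      using order_trans[OF norm_ge_zero Cg] by (intro mult_mono Cf Cg) simp_all
    then show ?thesis
      by (simp add: power_mult_distrib mult_ac)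
  qed
  define c where "c = complex_of_real (1 / sqrt (2 * pi))"
  have "(LINT p|lborel. brownian_symbol (fst p) (snd p) * cnj (wigner g f (fst p) (snd p)))
      = c * (\<integral>p. brownian_symbol (fst p) (snd p) *
            (\<integral>y. u (fst p + y / 2, fst p - y / 2) * cis (y * snd p) \<partial>lborel) \<partial>lborel)"
    by (simp add: cnj_wigner u_def c_def mult.left_commute)
  also have "\<dots> = c * (2 * pi * (\<integral>p. kb (fst p) (snd p) * u p \<partial>lborel))"
    by (simp only: integral_brownian_symbol_mult_fourier[OF u bound])
  also have "(\<integral>p. kb (fst p) (snd p) * u p \<partial>lborel) = cov_pairing kb f g"
    by (simp add: cov_pairing_def u_def mult.assoc)
  finally show "cov_pairing kb f g =
      c * (LINT p|lborel. brownian_symbol (fst p) (snd p) * cnj (wigner g f (fst p) (snd p)))"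
    by (simp add: c_def flip: of_real_mult)
qed

theorem mainTheorem14:
  shows "is_weyl_symbol
           (\<lambda>x \<xi>. complex_of_real (2 * x\<^sup>2 * (sinc (x * \<xi>))\<^sup>2 * heaviside x)) kb"
  using is_weyl_symbol_brownian_symbol by (simp add: brownian_symbol_def[abs_def])

end
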